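(* Let $K$ be a compact Hausdorff space with at least two points and let $\mathcal{A}$ be a non-empty subalgebra of $C(K,\mathbb{C})$. Suppose there is a subset $K_0\subset K$ such that for every $f\in C(K,\mathbb{C})$ and every $(x,y)\in K_0^2$ there exists a sequence $(f_n^{x,y})_{n\ge0}\subset\mathcal{A}$ with $f_n^{x,y}(t)\to f(t)$ as $n\to+\infty$ for $t\in\{x,y\}$. Suppose moreover that: (1) $\mathcal{A}$ separates the points of $K\setminus K_0$ (for distinct $x,y\in K\setminus K_0$ there is $g\in\mathcal{A}$ with $g(x)\neq g(y)$) and separates any point of $K_0$ from any (distinct) point of $K$; (2) at least one of the following holds: (2a) for every $x\in K\setminus K_0$ there exists $g\in\mathcal{A}$ with $g(x)\neq 0$, or (2b) $\mathcal{A}$ contains all constant functions; and (3) for every $g\in\mathcal{A}$ its complex conjugate $\bar g=\mathrm{Re}(g)-i\,\mathrm{Im}(g)$ belongs to $\mathcal{A}$. Then $\mathcal{A}$ is dense in $C(K,\mathbb{C})$ for the uniform norm.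
   Context: $C(K,\mathbb{C})$ is the algebra of continuous complex-valued functions on $K$ with the uniform norm $\|g\|=\sup_{x\in K}|g(x)|$; density and closure refer to this norm. *)

theory Defs
  imports "HOL-Analysis.Analysis"
begin

definition csubalgebra :: "'a::topological_space set \<Rightarrow> ('a \<Rightarrow> complex) set \<Rightarrow> bool" where
  "csubalgebra K A \<longleftrightarrow>
     (\<forall>f\<in>A. continuous_on K f) \<and>
     (\<forall>f\<in>A. \<forall>g\<in>A. (\<lambda>x. f x + g x) \<in> A) \<and>
     (\<forall>f\<in>A. \<forall>g\<in>A. (\<lambda>x. f x * g x) \<in> A) \<and>
     (\<forall>c. \<forall>f\<in>A. (\<lambda>x. c * f x) \<in> A)"

definition uniformly_dense :: "'a::topological_space set \<Rightarrow> ('a \<Rightarrow> complex) set \<Rightarrow> bool" where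
  "uniformly_dense K A \<longleftrightarrow>
     (\<forall>f. continuous_on K f \<longrightarrow> (\<forall>e>0. \<exists>g\<in>A. \<forall>x\<in>K. cmod (f x - g x) < e))"

end

theory Submission
  imports Defs
begin

text \<open>The hypotheses involving \<open>K\<^sub>0\<close> only serve to upgrade separation and non-vanishing
  from \<open>K - K\<^sub>0\<close> to all of \<open>K\<close>: points of \<open>K\<^sub>0\<close> are separated from all other points by (1),
  and some element of \<open>A\<close> is non-zero at \<open>x \<in> K\<^sub>0\<close> because elements of \<open>A\<close> converge to the
  constant \<open>1\<close> at \<open>x\<close>. What remains is the complex Stone--Weierstrass theorem for a self-adjoint
  algebra that separates points and vanishes nowhere. Its real-valued members form a real algebra,
  which contains \<open>Re g\<close>, \<open>Im g\<close> and \<open>\<bar>g\<bar>\<^sup>2\<close> for every \<open>g \<in> A\<close>; summing finitely many \<open>\<bar>g\<bar>\<^sup>2\<close> over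
  a compactness cover gives a member \<open>h\<^sub>0\<close> that is positive on \<open>K\<close>. Approximating \<open>f / h\<^sub>0\<close> in
  the unitization by the classical Stone--Weierstrass theorem and multiplying back by \<open>h\<^sub>0\<close>
  approximates \<open>f\<close> without using constants.\<close>

lemma csubalgebra_continuous: "csubalgebra K A \<Longrightarrow> g \<in> A \<Longrightarrow> continuous_on K g"
  and csubalgebra_add: "csubalgebra K A \<Longrightarrow> g \<in> A \<Longrightarrow> h \<in> A \<Longrightarrow> (\<lambda>x. g x + h x) \<in> A"
  and csubalgebra_mult: "csubalgebra K A \<Longrightarrow> g \<in> A \<Longrightarrow> h \<in> A \<Longrightarrow> (\<lambda>x. g x * h x) \<in> A"
  and csubalgebra_scale: "csubalgebra K A \<Longrightarrow> g \<in> A \<Longrightarrow> (\<lambda>x. c * g x) \<in> A"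
  unfolding csubalgebra_def by blast+

lemma csubalgebra_zero: "csubalgebra K A \<Longrightarrow> A \<noteq> {} \<Longrightarrow> (\<lambda>x. 0) \<in> A"
  using csubalgebra_scale[where c = 0] by fastforce

definition real_members :: "('a \<Rightarrow> complex) set \<Rightarrow> ('a \<Rightarrow> real) set" where
  "real_members A = {h. (\<lambda>x. complex_of_real (h x)) \<in> A}"

lemma real_members_iff: "h \<in> real_members A \<longleftrightarrow> (\<lambda>x. complex_of_real (h x)) \<in> A"
  by (simp add: real_members_def)

lemma real_members_continuous:
  assumes "csubalgebra K A" "h \<in> real_members A"
  shows "continuous_on K h"
  using continuous_on_Re[OF csubalgebra_continuous[OF assms(1)]] assms(2)
  by (force simp: real_members_iff)

lemma real_members_add:
  "csubalgebra K A \<Longrightarrow> g \<in> real_members A \<Longrightarrow> h \<in> real_members A \<Longrightarrow>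
    (\<lambda>x. g x + h x) \<in> real_members A"
  using csubalgebra_add by (fastforce simp: real_members_iff)

lemma real_members_mult:
  "csubalgebra K A \<Longrightarrow> g \<in> real_members A \<Longrightarrow> h \<in> real_members A \<Longrightarrow>
    (\<lambda>x. g x * h x) \<in> real_members A"
  using csubalgebra_mult by (fastforce simp: real_members_iff)

lemma real_members_scale:
  "csubalgebra K A \<Longrightarrow> h \<in> real_members A \<Longrightarrow> (\<lambda>x. c * h x) \<in> real_members A"
  using csubalgebra_scale[where c = "complex_of_real c"] by (fastforce simp: real_members_iff)

lemma real_members_zero: "csubalgebra K A \<Longrightarrow> A \<noteq> {} \<Longrightarrow> (\<lambda>x. 0) \<in> real_members A"
  using csubalgebra_zero by (fastforce simp: real_members_iff)

lemma Re_in_real_members: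
  assumes A: "csubalgebra K A" and cnj: "\<forall>g\<in>A. (\<lambda>x. cnj (g x)) \<in> A" and g: "g \<in> A"
  shows "(\<lambda>x. Re (g x)) \<in> real_members A"
proof -
  have "(\<lambda>x. (1/2) * (g x + cnj (g x))) \<in> A"
    using g cnj by (intro csubalgebra_scale[OF A] csubalgebra_add[OF A]) auto
  moreover have "(\<lambda>x. (1/2) * (g x + cnj (g x))) = (\<lambda>x. complex_of_real (Re (g x)))"
    by (auto simp: complex_eq_iff)
  ultimately show ?thesis by (simp add: real_members_iff)
qed

lemma Im_in_real_members:
  assumes A: "csubalgebra K A" and cnj: "\<forall>g\<in>A. (\<lambda>x. cnj (g x)) \<in> A" and g: "g \<in> A"
  shows "(\<lambda>x. Im (g x)) \<in> real_members A"
proof -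
  have "(\<lambda>x. - \<i> * g x) \<in> A"
    using g by (rule csubalgebra_scale[OF A])
  from Re_in_real_members[OF A cnj this] show ?thesis by simp
qed

lemma cmod_square_in_real_members:
  assumes A: "csubalgebra K A" and cnj: "\<forall>g\<in>A. (\<lambda>x. cnj (g x)) \<in> A" and g: "g \<in> A"
  shows "(\<lambda>x. (cmod (g x))\<^sup>2) \<in> real_members A"
proof -
  have "(\<lambda>x. g x * cnj (g x)) \<in> A" using csubalgebra_mult[OF A g] g cnj by blast
  then show ?thesis by (simp only: real_members_iff complex_norm_square)
qed

lemma sum_in_additive_set:
  assumes "finite D" "(\<lambda>x. 0) \<in> B" "\<And>g h. g \<in> B \<Longrightarrow> h \<in> B \<Longrightarrow> (\<lambda>x. g x + h x) \<in> B"
    and "\<And>d. d \<in> D \<Longrightarrow> p d \<in> B"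
  shows "(\<lambda>x. \<Sum>d\<in>D. p d x :: 'b::comm_monoid_add) \<in> B"
  using assms by (induction D rule: finite_induct) auto

lemma positive_member_of_compact:
  fixes K :: "'a::topological_space set" and B :: "('a \<Rightarrow> real) set"
  assumes K: "compact K"
    and zero: "(\<lambda>x. 0) \<in> B" and add: "\<And>g h. g \<in> B \<Longrightarrow> h \<in> B \<Longrightarrow> (\<lambda>x. g x + h x) \<in> B"
    and cont: "\<And>h. h \<in> B \<Longrightarrow> continuous_on K h"
    and local: "\<And>x. x \<in> K \<Longrightarrow> \<exists>h\<in>B. h x > 0 \<and> (\<forall>y\<in>K. h y \<ge> 0)"
  obtains h0 where "h0 \<in> B" "\<And>x. x \<in> K \<Longrightarrow> h0 x > 0"
proof -
  obtain p where p: "\<And>x. x \<in> K \<Longrightarrow> p x \<in> B \<and> p x x > 0 \<and> (\<forall>y\<in>K. p x y \<ge> 0)"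
    using local by metis
  have "\<exists>U. open U \<and> x \<in> U \<and> (\<forall>y\<in>K \<inter> U. p x y > 0)" if x: "x \<in> K" for x
  proof -
    have "openin (top_of_set K) (K \<inter> p x -` {0<..})"
      using continuous_openin_preimage_gen[OF cont, of "p x" "{0<..}"] p[OF x] by simp
    then obtain U where "open U" "K \<inter> p x -` {0<..} = K \<inter> U"
      unfolding openin_open by blast
    then show ?thesis using p[OF x] x by auto
  qed
  then obtain U where U: "\<And>x. x \<in> K \<Longrightarrow> open (U x) \<and> x \<in> U x \<and> (\<forall>y\<in>K \<inter> U x. p x y > 0)"
    by metis
  obtain D where D: "D \<subseteq> K" "finite D" "K \<subseteq> (\<Union>d\<in>D. U d)"
    using compactE_image[OF K, of K U] U by blast
  define h0 where "h0 = (\<lambda>y. \<Sum>d\<in>D. p d y)"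
  show thesis
  proof
    show "h0 \<in> B"
      unfolding h0_def using D p by (intro sum_in_additive_set[OF D(2) zero add]) auto
    fix y assume y: "y \<in> K"
    then obtain d where d: "d \<in> D" "y \<in> U d" using D(3) by blast
    have "0 < p d y" using U[of d] d y D(1) by blast
    also have "\<dots> \<le> h0 y"
      unfolding h0_def using D p y by (intro member_le_sum d(1)) auto
    finally show "h0 y > 0" .
  qed
qed

lemma Stone_Weierstrass_positive_member:
  fixes K :: "'a::t2_space set" and B :: "('a \<Rightarrow> real) set"
  assumes K: "compact K"
    and add: "\<And>g h. g \<in> B \<Longrightarrow> h \<in> B \<Longrightarrow> (\<lambda>x. g x + h x) \<in> B"
    and mult: "\<And>g h. g \<in> B \<Longrightarrow> h \<in> B \<Longrightarrow> (\<lambda>x. g x * h x) \<in> B"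
    and scale: "\<And>c h. h \<in> B \<Longrightarrow> (\<lambda>x. c * h x) \<in> B"
    and cont: "\<And>h. h \<in> B \<Longrightarrow> continuous_on K h"
    and sep: "\<And>x y. x \<in> K \<Longrightarrow> y \<in> K \<Longrightarrow> x \<noteq> y \<Longrightarrow> \<exists>h\<in>B. h x \<noteq> h y"
    and h0: "h0 \<in> B" "\<And>x. x \<in> K \<Longrightarrow> h0 x > 0"
    and f: "continuous_on K f" and e: "e > 0"
  shows "\<exists>h\<in>B. \<forall>x\<in>K. \<bar>f x - h x\<bar> < e"
proof -
  define P where "P g \<longleftrightarrow> (\<exists>c. \<exists>h\<in>B. g = (\<lambda>x. c + h x))" for g :: "'a \<Rightarrow> real"
  have zero: "(\<lambda>x. 0) \<in> B" using scale[OF h0(1), of 0] by simp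
  obtain M where M: "M > 0" "\<And>x. x \<in> K \<Longrightarrow> h0 x \<le> M"
    using compact_imp_bounded[OF compact_continuous_image[OF cont[OF h0(1)] K]]
    unfolding bounded_pos by force
  have fh0: "continuous_on K (\<lambda>x. f x / h0 x)"
    using f cont[OF h0(1)] h0(2) by (intro continuous_intros) force+
  have "\<exists>g. P g \<and> (\<forall>x\<in>K. \<bar>f x / h0 x - g x\<bar> < e / M)"
  proof (rule Stone_Weierstrass_HOL[OF K _ _ _ _ _ fh0])
    show "P (\<lambda>x. c)" for c unfolding P_def using zero by force
    show "P g \<Longrightarrow> continuous_on K g" for g
      unfolding P_def using cont by (auto intro!: continuous_intros)
    show "P (\<lambda>x. g x + h x)" if "P g \<and> P h" for g h
    proof -
      from that obtain c1 h1 c2 h2 where "h1 \<in> B" "h2 \<in> B"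
        and "g = (\<lambda>x. c1 + h1 x)" "h = (\<lambda>x. c2 + h2 x)" unfolding P_def by blast
      then show ?thesis unfolding P_def
        by (intro exI[of _ "c1 + c2"] bexI[of _ "\<lambda>x. h1 x + h2 x"]) (auto simp: add)
    qed
    show "P (\<lambda>x. g x * h x)" if "P g \<and> P h" for g h
    proof -
      from that obtain c1 h1 c2 h2 where H: "h1 \<in> B" "h2 \<in> B"
        and "g = (\<lambda>x. c1 + h1 x)" "h = (\<lambda>x. c2 + h2 x)" unfolding P_def by blast
      moreover have "(\<lambda>x. c1 * h2 x + c2 * h1 x + h1 x * h2 x) \<in> B"
        using H by (intro add scale mult)
      ultimately show ?thesis unfolding P_def
        by (intro exI[of _ "c1 * c2"] bexI[of _ "\<lambda>x. c1 * h2 x + c2 * h1 x + h1 x * h2 x"])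
          (auto simp: algebra_simps)
    qed
    show "\<exists>g. P g \<and> g x \<noteq> g y" if "x \<in> K \<and> y \<in> K \<and> x \<noteq> y" for x y
      using sep that unfolding P_def by (metis add_0)
  qed (use e M in auto)
  then obtain c h where h: "h \<in> B" and ch: "\<forall>x\<in>K. \<bar>f x / h0 x - (c + h x)\<bar> < e / M"
    unfolding P_def by auto
  show ?thesis
  proof
    show "(\<lambda>x. c * h0 x + h0 x * h x) \<in> B" using h h0 by (intro add scale mult)
    show "\<forall>x\<in>K. \<bar>f x - (c * h0 x + h0 x * h x)\<bar> < e"
    proof
      fix x assume x: "x \<in> K"
      have "\<bar>f x - (c * h0 x + h0 x * h x)\<bar> = h0 x * \<bar>f x / h0 x - (c + h x)\<bar>"
        using h0(2)[OF x] by (simp add: field_simps abs_mult)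
      also have "\<dots> \<le> M * \<bar>f x / h0 x - (c + h x)\<bar>"
        using M(2)[OF x] by (intro mult_right_mono) auto
      also have "\<dots> < M * (e / M)"
        using ch x M(1) by (intro mult_strict_left_mono) auto
      finally show "\<bar>f x - (c * h0 x + h0 x * h x)\<bar> < e" using M(1) by simp
    qed
  qed
qed

lemma real_members_separate:
  assumes A: "csubalgebra K A" and cnj: "\<forall>g\<in>A. (\<lambda>x. cnj (g x)) \<in> A"
    and g: "g \<in> A" "g x \<noteq> g y"
  shows "\<exists>h\<in>real_members A. h x \<noteq> h y"
proof (cases "Re (g x) = Re (g y)")
  case True
  with g(2) have "Im (g x) \<noteq> Im (g y)" by (simp add: complex_eq_iff)
  with Im_in_real_members[OF A cnj g(1)] show ?thesis by (intro bexI) auto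
next
  case False
  with Re_in_real_members[OF A cnj g(1)] show ?thesis by (intro bexI) auto
qed

lemma real_members_approximate:
  fixes K :: "'a::t2_space set"
  assumes K: "compact K" and A: "csubalgebra K A" "A \<noteq> {}"
    and cnj: "\<forall>g\<in>A. (\<lambda>x. cnj (g x)) \<in> A"
    and sep: "\<And>x y. x \<in> K \<Longrightarrow> y \<in> K \<Longrightarrow> x \<noteq> y \<Longrightarrow> \<exists>g\<in>A. g x \<noteq> g y"
    and nz: "\<And>x. x \<in> K \<Longrightarrow> \<exists>g\<in>A. g x \<noteq> 0"
    and u: "continuous_on K u" and e: "e > 0"
  shows "\<exists>h\<in>real_members A. \<forall>x\<in>K. \<bar>u x - h x\<bar> < e"
proof -
  have positive_at: "\<exists>h\<in>real_members A. h x > 0 \<and> (\<forall>y\<in>K. h y \<ge> 0)"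
    if x: "x \<in> K" for x
  proof -
    obtain g where g: "g \<in> A" "g x \<noteq> 0" using nz[OF x] by blast
    show ?thesis
      using cmod_square_in_real_members[OF A(1) cnj g(1)] g(2) by (intro bexI) auto
  qed
  obtain h0 where h0: "h0 \<in> real_members A" "\<And>x. x \<in> K \<Longrightarrow> h0 x > 0"
    using positive_member_of_compact[OF K real_members_zero[OF A] real_members_add[OF A(1)]
        real_members_continuous[OF A(1)] positive_at] by blast
  have sepB: "\<exists>h\<in>real_members A. h x \<noteq> h y" if xy: "x \<in> K" "y \<in> K" "x \<noteq> y" for x y
  proof -
    obtain g where "g \<in> A" "g x \<noteq> g y" using sep[OF xy] by blast
    then show ?thesis by (rule real_members_separate[OF A(1) cnj])
  qed
  show ?thesis
    by (rule Stone_Weierstrass_positive_member[OF K real_members_add[OF A(1)]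
        real_members_mult[OF A(1)] real_members_scale[OF A(1)] real_members_continuous[OF A(1)]
        sepB h0 u e])
qed

theorem Stone_Weierstrass_selfadjoint_csubalgebra:
  fixes K :: "'a::t2_space set"
  assumes K: "compact K" and A: "csubalgebra K A" "A \<noteq> {}"
    and cnj: "\<forall>g\<in>A. (\<lambda>x. cnj (g x)) \<in> A"
    and sep: "\<And>x y. x \<in> K \<Longrightarrow> y \<in> K \<Longrightarrow> x \<noteq> y \<Longrightarrow> \<exists>g\<in>A. g x \<noteq> g y"
    and nz: "\<And>x. x \<in> K \<Longrightarrow> \<exists>g\<in>A. g x \<noteq> 0"
  shows "uniformly_dense K A"
  unfolding uniformly_dense_def
proof (intro allI impI)
  fix f :: "'a \<Rightarrow> complex" and e :: real
  assume f: "continuous_on K f" and e: "e > 0"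
  obtain h1 where h1: "h1 \<in> real_members A" "\<forall>x\<in>K. \<bar>Re (f x) - h1 x\<bar> < e / 2"
    using real_members_approximate[OF K A cnj sep nz continuous_on_Re[OF f] half_gt_zero[OF e]] ..
  obtain h2 where h2: "h2 \<in> real_members A" "\<forall>x\<in>K. \<bar>Im (f x) - h2 x\<bar> < e / 2"
    using real_members_approximate[OF K A cnj sep nz continuous_on_Im[OF f] half_gt_zero[OF e]] ..
  let ?g = "\<lambda>x. complex_of_real (h1 x) + \<i> * complex_of_real (h2 x)"
  show "\<exists>g\<in>A. \<forall>x\<in>K. cmod (f x - g x) < e"
  proof
    show "?g \<in> A"
      using h1(1) h2(1) unfolding real_members_iff
      by (intro csubalgebra_add[OF A(1)] csubalgebra_scale[OF A(1)])
    show "\<forall>x\<in>K. cmod (f x - ?g x) < e"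
    proof
      fix x assume x: "x \<in> K"
      have "cmod (f x - ?g x) \<le> \<bar>Re (f x) - h1 x\<bar> + \<bar>Im (f x) - h2 x\<bar>"
        using cmod_le[of "f x - ?g x"] by simp
      also have "\<dots> < e / 2 + e / 2" using h1(2) h2(2) x by (intro add_strict_mono) auto
      finally show "cmod (f x - ?g x) < e" by simp
    qed
  qed
qed

lemma nonvanishing_if_limit_nonzero:
  assumes "\<And>n. F n \<in> A" "(\<lambda>n. F n x) \<longlonglongrightarrow> c" "c \<noteq> 0"
  shows "\<exists>g\<in>A. g x \<noteq> (0::'b::{zero,t2_space})"
proof (rule ccontr)
  assume "\<not> ?thesis"
  then have "(\<lambda>n. F n x) = (\<lambda>n. 0)" using assms(1) by auto
  then have "(\<lambda>n. F n x) \<longlonglongrightarrow> 0" by simp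
  with assms(2,3) LIMSEQ_unique show False by metis
qed

lemma separates_points_split:
  assumes "\<forall>x\<in>K - K0. \<forall>y\<in>K - K0. x \<noteq> y \<longrightarrow> (\<exists>g\<in>A. g x \<noteq> g y)"
    and "\<forall>x\<in>K0. \<forall>y\<in>K. x \<noteq> y \<longrightarrow> (\<exists>g\<in>A. g x \<noteq> g y)"
    and xy: "x \<in> K" "y \<in> K" "x \<noteq> y"
  shows "\<exists>g\<in>A. g x \<noteq> g y"
proof -
  consider "x \<in> K0" | "y \<in> K0" | "x \<in> K - K0" "y \<in> K - K0" using xy by blast
  then show ?thesis
  proof cases
    case 1
    show ?thesis using assms(2)[rule_format, OF 1 xy(2,3)] .
  next
    case 2
    obtain g where "g \<in> A" "g y \<noteq> g x"
      using assms(2)[rule_format, OF 2 xy(1) xy(3)[symmetric]] ..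
    then show ?thesis by (intro bexI[of _ g]) auto
  next
    case 3
    show ?thesis using assms(1)[rule_format, OF 3 xy(3)] .
  qed
qed

theorem corollary1:
  fixes K K0 :: "'a::t2_space set" and A :: "('a \<Rightarrow> complex) set"
  assumes "compact K"
    and "\<exists>x\<in>K. \<exists>y\<in>K. x \<noteq> y"
    and "csubalgebra K A" and "A \<noteq> {}"
    and "K0 \<subseteq> K"
    and "\<forall>f. continuous_on K f \<longrightarrow> (\<forall>x\<in>K0. \<forall>y\<in>K0. \<exists>F::nat \<Rightarrow> 'a \<Rightarrow> complex.
            (\<forall>n. F n \<in> A) \<and> (\<lambda>n. F n x) \<longlonglongrightarrow> f x \<and> (\<lambda>n. F n y) \<longlonglongrightarrow> f y)"
    and "\<forall>x\<in>K - K0. \<forall>y\<in>K - K0. x \<noteq> y \<longrightarrow> (\<exists>g\<in>A. g x \<noteq> g y)"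
    and "\<forall>x\<in>K0. \<forall>y\<in>K. x \<noteq> y \<longrightarrow> (\<exists>g\<in>A. g x \<noteq> g y)"
    and "(\<forall>x\<in>K - K0. \<exists>g\<in>A. g x \<noteq> 0) \<or> (\<forall>c. (\<lambda>x. c) \<in> A)"
    and "\<forall>g\<in>A. (\<lambda>x. cnj (g x)) \<in> A"
  shows "uniformly_dense K A"
proof (rule Stone_Weierstrass_selfadjoint_csubalgebra[OF assms(1,3,4,10)])
  show "\<exists>g\<in>A. g x \<noteq> g y" if "x \<in> K" "y \<in> K" "x \<noteq> y" for x y
    using separates_points_split[OF assms(7,8) that] .
  show "\<exists>g\<in>A. g x \<noteq> 0" if x: "x \<in> K" for x
  proof (cases "x \<in> K0")
    case True
    have "continuous_on K (\<lambda>_. 1 :: complex)" by simp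
    then obtain F where F: "\<forall>n. F n \<in> A" "(\<lambda>n. F n x) \<longlonglongrightarrow> 1"
      using assms(6) True by meson
    show ?thesis using nonvanishing_if_limit_nonzero[OF F(1)[rule_format] F(2)] by simp
  next
    case False
    with assms(9) x have "(\<exists>g\<in>A. g x \<noteq> 0) \<or> (\<lambda>_. 1) \<in> A" by blast
    then show ?thesis
    proof
      assume "(\<lambda>_. 1) \<in> A"
      then show ?thesis by (intro bexI[of _ "\<lambda>_. 1"]) simp_all
    qed
  qed
qed

end
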